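(* Let $\Delta=\{q\in\mathbb R_+^C:\sum_cq_c=1\}$ and let $\widehat p$ be in the relative interior of $\Delta$ (all entries positive). For any $\widehat t,t^\star\in\mathbb R^C$, any $\rho\in\mathbb R_+^C$ and any $\varepsilon\ge\widehat p^\top\rho$, \[\sup\Big\{q^\top t^\star-\widehat p^\top\widehat t:\ q\in\Delta,\ \sum_{c=1}^Cq_c(\log q_c-\log\widehat p_c+\rho_c)\le\varepsilon\Big\}\le\|t^\star-\widehat t\|_\infty+\frac{\sqrt{2\varepsilon}}{\min_c\sqrt{\widehat p_c}}\sqrt{\sum_{c=1}^C\widehat p_c(\widehat t_c-\bar t)^2},\] where $\bar t=\widehat p^\top\widehat t$.
   Context: The convention $0\log0=0$ is used. *)

theory Defs
  imports "HOL-Analysis.Analysis"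
begin

definition prob_simplex :: "('c::finite \<Rightarrow> real) set" where
  "prob_simplex = {q. (\<forall>c. q c \<ge> 0) \<and> (\<Sum>c\<in>UNIV. q c) = 1}"

text \<open>The term q_c (log q_c - log p_c + rho_c), with the convention 0 log 0 = 0:
  it is taken to be 0 when q_c = 0.\<close>
definition klterm :: "real \<Rightarrow> real \<Rightarrow> real \<Rightarrow> real" where
  "klterm q p r = (if q = 0 then 0 else q * (ln q - ln p + r))"

end

theory Submission
  imports Defs
begin

(* For p, q in (0,1] the function x |-> x ln(x/p) - (x - p) - (x - p)^2/2 vanishes at p and has
   derivative ln(x/p) - (x - p), which by ln y <= y - 1 has the sign of x - p on (0,1]. Summed
   over the classes, the KL constraint thus bounds the squared Euclidean distance |q - p|^2 by
   2 eps. The gap q.t* - p.t splits into q.(t* - t), at most |t* - t|_inf, plus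
   (q - p).(t - tbar), which Cauchy-Schwarz with weights sqrt p_c bounds by
   |q - p| / min_c sqrt p_c times the p-standard deviation of t. *)

lemma mul_ln_div_ge_quadratic:
  fixes q p :: real
  assumes "0 < q" "q \<le> 1" "0 < p" "p \<le> 1"
  shows "(q - p) + (q - p)\<^sup>2 / 2 \<le> q * (ln q - ln p)"
proof -
  define \<phi> where "\<phi> x = x * (ln x - ln p) - (x - p) - (x - p)\<^sup>2 / 2" for x
  have deriv: "(\<phi> has_real_derivative (ln x - ln p - (x - p))) (at x)" if "0 < x" for x
    unfolding \<phi>_def using that by (auto intro!: derivative_eq_intros simp: field_simps)
  have above: "x - p \<le> ln x - ln p" if "p \<le> x" "x \<le> 1" for x
  proof -
    have "ln (p / x) \<le> p / x - 1" using that assms by (intro ln_le_minus_one) auto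
    then have "(x - p) / x \<le> ln x - ln p" using that assms by (simp add: ln_div field_simps)
    moreover have "x - p \<le> (x - p) / x"
      using that assms by (simp add: le_divide_eq mult_left_le)
    ultimately show ?thesis by linarith
  qed
  have below: "ln x - ln p \<le> x - p" if "0 < x" "x \<le> p" for x
  proof -
    have "ln (x / p) \<le> x / p - 1" using that assms by (intro ln_le_minus_one) auto
    then have "ln x - ln p \<le> (x - p) / p" using that assms by (simp add: ln_div field_simps)
    moreover have "(x - p) / p \<le> x - p"
      using that assms mult_left_mono_neg[of p 1 "x - p"] by (simp add: divide_le_eq)
    ultimately show ?thesis by linarith
  qed
  have "\<phi> p \<le> \<phi> q"
  proof (cases "p \<le> q")
    case True
    show ?thesis
      by (rule DERIV_nonneg_imp_nondecreasing[OF True])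
        (use deriv above assms in \<open>force\<close>)
  next
    case False
    show ?thesis
      by (rule DERIV_nonpos_imp_nonincreasing[of q p])
        (use False deriv below assms in \<open>force\<close>)+
  qed
  then show ?thesis by (simp add: \<phi>_def)
qed

lemma klterm_ge_quadratic:
  assumes "0 \<le> q" "q \<le> 1" "0 < p" "p \<le> 1" "0 \<le> r"
  shows "(q - p) + (q - p)\<^sup>2 / 2 \<le> klterm q p r"
proof (cases "q = 0")
  case True
  then show ?thesis using assms by (simp add: klterm_def power2_eq_square)
next
  case False
  then have "(q - p) + (q - p)\<^sup>2 / 2 \<le> q * (ln q - ln p)"
    using assms by (intro mul_ln_div_ge_quadratic) auto
  also have "\<dots> \<le> klterm q p r" using False assms by (simp add: klterm_def algebra_simps)
  finally show ?thesis .
qed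

lemma prob_simplex_le_one:
  assumes "q \<in> prob_simplex"
  shows "q c \<le> 1"
proof -
  have "q c \<le> (\<Sum>d\<in>UNIV. q d)"
    using assms by (intro member_le_sum) (auto simp: prob_simplex_def)
  then show ?thesis using assms by (simp add: prob_simplex_def)
qed

lemma sum_sq_diff_le_klterm:
  assumes q: "q \<in> prob_simplex" and p: "p \<in> prob_simplex" "\<forall>c. 0 < p c"
    and rho: "\<forall>c. 0 \<le> rho c"
  shows "(\<Sum>c\<in>UNIV. (q c - p c)\<^sup>2) \<le> 2 * (\<Sum>c\<in>UNIV. klterm (q c) (p c) (rho c))"
proof -
  have "(\<Sum>c\<in>UNIV. (q c - p c)\<^sup>2) / 2 = (\<Sum>c\<in>UNIV. (q c - p c) + (q c - p c)\<^sup>2 / 2)"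
    using q p by (simp add: prob_simplex_def sum.distrib sum_subtractf sum_divide_distrib)
  also have "\<dots> \<le> (\<Sum>c\<in>UNIV. klterm (q c) (p c) (rho c))"
    using q p rho prob_simplex_le_one[OF q] prob_simplex_le_one[OF p(1)]
    by (intro sum_mono klterm_ge_quadratic) (auto simp: prob_simplex_def)
  finally show ?thesis by simp
qed

lemma prob_simplex_sum_le:
  assumes "q \<in> prob_simplex" "\<And>c. f c \<le> B"
  shows "(\<Sum>c\<in>UNIV. q c * f c) \<le> B"
proof -
  have "(\<Sum>c\<in>UNIV. q c * f c) \<le> (\<Sum>c\<in>UNIV. q c * B)"
    using assms by (intro sum_mono mult_left_mono) (auto simp: prob_simplex_def)
  also have "\<dots> = B" using assms(1) by (simp add: prob_simplex_def flip: sum_distrib_right)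
  finally show ?thesis .
qed

lemma weighted_Cauchy_Schwarz_sum:
  fixes u s p :: "'a \<Rightarrow> real"
  assumes p: "\<And>c. c \<in> A \<Longrightarrow> 0 < p c" and m: "0 < m" "\<And>c. c \<in> A \<Longrightarrow> m \<le> sqrt (p c)"
  shows "(\<Sum>c\<in>A. u c * s c) \<le> sqrt (\<Sum>c\<in>A. (u c)\<^sup>2) / m * sqrt (\<Sum>c\<in>A. p c * (s c)\<^sup>2)"
proof -
  have "(\<Sum>c\<in>A. u c * s c) = (\<Sum>c\<in>A. (u c / sqrt (p c)) * (sqrt (p c) * s c))"
    using p by (intro sum.cong) (auto simp: less_imp_neq[symmetric])
  then have "(\<Sum>c\<in>A. u c * s c)\<^sup>2
        \<le> (\<Sum>c\<in>A. (u c / sqrt (p c))\<^sup>2) * (\<Sum>c\<in>A. (sqrt (p c) * s c)\<^sup>2)"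
    by (simp only: Cauchy_Schwarz_ineq_sum)
  also have "\<dots> \<le> (\<Sum>c\<in>A. (u c)\<^sup>2 / m\<^sup>2) * (\<Sum>c\<in>A. p c * (s c)\<^sup>2)"
  proof (rule mult_mono)
    show "(\<Sum>c\<in>A. (u c / sqrt (p c))\<^sup>2) \<le> (\<Sum>c\<in>A. (u c)\<^sup>2 / m\<^sup>2)"
    proof (rule sum_mono)
      fix c assume c: "c \<in> A"
      have "m\<^sup>2 \<le> (sqrt (p c))\<^sup>2" using m c by (intro power_mono) auto
      then have "m\<^sup>2 \<le> p c" using p[OF c] by simp
      then show "(u c / sqrt (p c))\<^sup>2 \<le> (u c)\<^sup>2 / m\<^sup>2"
        using p[OF c] m by (simp add: power_divide divide_left_mono)
    qed
    show "(\<Sum>c\<in>A. (sqrt (p c) * s c)\<^sup>2) \<le> (\<Sum>c\<in>A. p c * (s c)\<^sup>2)"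
      using p by (intro sum_mono) (simp add: power_mult_distrib less_imp_le)
  qed (auto intro: sum_nonneg)
  finally have "(\<Sum>c\<in>A. u c * s c)\<^sup>2 \<le> ((\<Sum>c\<in>A. (u c)\<^sup>2) / m\<^sup>2) * (\<Sum>c\<in>A. p c * (s c)\<^sup>2)"
    by (simp add: sum_divide_distrib)
  then have "\<bar>\<Sum>c\<in>A. u c * s c\<bar> \<le> sqrt ((\<Sum>c\<in>A. (u c)\<^sup>2) / m\<^sup>2 * (\<Sum>c\<in>A. p c * (s c)\<^sup>2))"
    by (metis real_sqrt_abs real_sqrt_le_mono)
  also have "\<dots> = sqrt (\<Sum>c\<in>A. (u c)\<^sup>2) / m * sqrt (\<Sum>c\<in>A. p c * (s c)\<^sup>2)"
    using m by (simp add: real_sqrt_mult real_sqrt_divide)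
  finally show ?thesis by linarith
qed

lemma kl_constrained_gap_le:
  fixes p q t tstar rho :: "'c::finite \<Rightarrow> real"
  assumes p: "p \<in> prob_simplex" "\<forall>c. 0 < p c" and q: "q \<in> prob_simplex"
    and rho: "\<forall>c. 0 \<le> rho c" and kl: "(\<Sum>c\<in>UNIV. klterm (q c) (p c) (rho c)) \<le> eps"
    and M: "\<And>c. \<bar>tstar c - t c\<bar> \<le> M" and m: "0 < m" "\<And>c. m \<le> sqrt (p c)"
  shows "(\<Sum>c\<in>UNIV. q c * tstar c) - (\<Sum>c\<in>UNIV. p c * t c)
         \<le> M + sqrt (2 * eps) / m * sqrt (\<Sum>c\<in>UNIV. p c * (t c - (\<Sum>d\<in>UNIV. p d * t d))\<^sup>2)"
    (is "_ \<le> _ + _ * sqrt ?V")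
proof -
  define tbar where "tbar = (\<Sum>d\<in>UNIV. p d * t d)"
  have "(\<Sum>c\<in>UNIV. (q c - p c) * (t c - tbar))
        = (\<Sum>c\<in>UNIV. q c * t c) - (\<Sum>c\<in>UNIV. p c * t c) - tbar * ((\<Sum>c\<in>UNIV. q c) - (\<Sum>c\<in>UNIV. p c))"
    by (simp add: algebra_simps sum_subtractf sum_distrib_left sum_distrib_right sum.distrib)
  then have "(\<Sum>c\<in>UNIV. q c * tstar c) - (\<Sum>c\<in>UNIV. p c * t c)
        = (\<Sum>c\<in>UNIV. q c * (tstar c - t c)) + (\<Sum>c\<in>UNIV. (q c - p c) * (t c - tbar))"
    using p(1) q by (simp add: prob_simplex_def right_diff_distrib sum_subtractf)
  also have "(\<Sum>c\<in>UNIV. q c * (tstar c - t c)) \<le> M"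
    using q M by (intro prob_simplex_sum_le) (auto intro: order_trans[OF abs_ge_self])
  also have "(\<Sum>c\<in>UNIV. (q c - p c) * (t c - tbar))
             \<le> sqrt (\<Sum>c\<in>UNIV. (q c - p c)\<^sup>2) / m * sqrt ?V"
    unfolding tbar_def using p m by (intro weighted_Cauchy_Schwarz_sum) auto
  also have "\<dots> \<le> sqrt (2 * eps) / m * sqrt ?V"
  proof (rule mult_right_mono)
    have "0 \<le> ?V" using p(2) by (intro sum_nonneg mult_nonneg_nonneg) (auto simp: less_imp_le)
    then show "0 \<le> sqrt ?V" by simp
  qed (use sum_sq_diff_le_klterm[OF q p rho] kl m in \<open>auto intro!: divide_right_mono\<close>)
  finally show ?thesis by simp
qed

theorem lemmaC1:
  fixes p t tstar rho :: "'c::finite \<Rightarrow> real" and eps :: real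
  assumes "p \<in> prob_simplex" and "\<forall>c. p c > 0"
    and "\<forall>c. rho c \<ge> 0"
    and "eps \<ge> (\<Sum>c\<in>UNIV. p c * rho c)"
  shows "Sup {(\<Sum>c\<in>UNIV. q c * tstar c) - (\<Sum>c\<in>UNIV. p c * t c) | q.
              q \<in> prob_simplex \<and> (\<Sum>c\<in>UNIV. klterm (q c) (p c) (rho c)) \<le> eps}
         \<le> (MAX c\<in>UNIV. \<bar>tstar c - t c\<bar>)
           + sqrt (2 * eps) / (MIN c\<in>UNIV. sqrt (p c))
             * sqrt (\<Sum>c\<in>UNIV. p c * (t c - (\<Sum>d\<in>UNIV. p d * t d))\<^sup>2)"
    (is "Sup ?S \<le> ?B")
proof (rule cSup_least)
  have "(\<Sum>c\<in>UNIV. klterm (p c) (p c) (rho c)) = (\<Sum>c\<in>UNIV. p c * rho c)"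
    using assms(2) by (intro sum.cong) (auto simp: klterm_def)
  then show "?S \<noteq> {}" using assms(1,4) by fastforce
next
  fix x assume "x \<in> ?S"
  then obtain q where x: "x = (\<Sum>c\<in>UNIV. q c * tstar c) - (\<Sum>c\<in>UNIV. p c * t c)"
    and q: "q \<in> prob_simplex" and kl: "(\<Sum>c\<in>UNIV. klterm (q c) (p c) (rho c)) \<le> eps"
    by blast
  have "0 < (MIN c\<in>UNIV. sqrt (p c))" using assms(2) by (simp add: Min_gr_iff)
  then show "x \<le> ?B" unfolding x
    using assms(1-3) q kl by (intro kl_constrained_gap_le) auto
qed

end
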